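(* Let $G=(V,E,\Omega)$ be a connected finite graph with vertex set $V\subset\mathbb{R}^n$, edge set $E$ and a non-empty set $\Omega\subset V$, and let $f:\Omega\to\mathbb{R}^m$. Let $u\in E(f)$ and $x\in V\setminus\Omega$. Define $v:V\to\mathbb{R}^m$ by $v(y)=u(y)$ for $y\in V\setminus\{x\}$ and $v(x)=K(u,S(x))(x)$. If $K(u,S(x))(x)\neq u(x)$, then $v$ is tighter than $u$ on $G$.
   Context: For $x\in V$, $S(x):=\{y\in V:(x,y)\in E\}$ is the neighborhood of $x$ in $G$. $E(f)$ denotes the set of all extensions of $f$ to $V$, i.e. functions $V\to\mathbb{R}^m$ agreeing with $f$ on $\Omega$; $\|\cdot\|$ is the Euclidean norm. For a finite set $A\subset\mathbb{R}^n$, a map $g:A\to\mathbb{R}^m$ and $x\in\mathbb{R}^n\setminus A$, there is a unique $y\in\mathbb{R}^m$ minimizing $\sup_{a\in A}\|g(a)-y\|/\|a-x\|$; this minimizer is denoted $K(g,A)(x)$ (the Kirszbraun value of $g$ restricted to $A$ at $x$). For $w\in E(f)$ and $x\in V\setminus\Omega$, the local Lipschitz constant is $Lw(x):=\sup_{y\in S(x)}\|w(y)-w(x)\|/\|y-x\|$. For $u,v\in E(f)$, $v$ is tighter than $u$ on $G$ if $\max\{Lu(x):Lu(x)>Lv(x),\,x\in V\setminus\Omega\}>\max\{Lv(x):Lv(x)>Lu(x),\,x\in V\setminus\Omega\}$, with the convention that the maximum over the empty set is $0$. *)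

theory Defs
  imports "HOL-Analysis.Analysis"
begin

definition connected_graph :: "'a set \<Rightarrow> ('a \<times> 'a) set \<Rightarrow> bool" where
  "connected_graph V E \<longleftrightarrow> finite V \<and> E \<subseteq> V \<times> V \<and> sym E \<and> irrefl E
     \<and> (\<forall>a\<in>V. \<forall>b\<in>V. (a, b) \<in> E\<^sup>*)"

definition nbhd :: "'a set \<Rightarrow> ('a \<times> 'a) set \<Rightarrow> 'a \<Rightarrow> 'a set" where
  "nbhd V E x = {y \<in> V. (x, y) \<in> E}"

definition extensions :: "'a set \<Rightarrow> ('a \<Rightarrow> 'b) \<Rightarrow> ('a \<Rightarrow> 'b) set" where
  "extensions \<Omega> f = {w. \<forall>y\<in>\<Omega>. w y = f y}"

definition kirszbraun_value :: "('a::euclidean_space \<Rightarrow> 'b::euclidean_space) \<Rightarrow> 'a set \<Rightarrow> 'a \<Rightarrow> 'b" where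
  "kirszbraun_value g A x =
     (THE y. \<forall>z. (SUP a\<in>A. norm (g a - y) / norm (a - x))
                \<le> (SUP a\<in>A. norm (g a - z) / norm (a - x)))"

definition local_lip :: "'a set \<Rightarrow> ('a \<times> 'a) set \<Rightarrow> ('a::euclidean_space \<Rightarrow> 'b::euclidean_space) \<Rightarrow> 'a \<Rightarrow> real" where
  "local_lip V E w x = (SUP y\<in>nbhd V E x. norm (w y - w x) / norm (y - x))"

definition max0 :: "real set \<Rightarrow> real" where
  "max0 A = (if A = {} then 0 else Max A)"

definition tighter :: "'a set \<Rightarrow> ('a \<times> 'a) set \<Rightarrow> 'a set \<Rightarrow> ('a::euclidean_space \<Rightarrow> 'b::euclidean_space) \<Rightarrow> ('a \<Rightarrow> 'b) \<Rightarrow> bool" where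
  "tighter V E \<Omega> v u \<longleftrightarrow>
     max0 {local_lip V E u x | x. x \<in> V - \<Omega> \<and> local_lip V E u x > local_lip V E v x}
     > max0 {local_lip V E v x | x. x \<in> V - \<Omega> \<and> local_lip V E v x > local_lip V E u x}"

end

theory Submission
  imports Defs
begin

text \<open>The Kirszbraun objective \<open>\<phi>(y)\<close>, the maximum over
  \<open>a \<in> S(x)\<close> of \<open>\<parallel>u a - y\<parallel> / \<parallel>a - x\<parallel>\<close>,
  is continuous and coercive, and at the midpoint of two distinct points of a sublevel set every
  quotient drops strictly (strict convexity of the Euclidean ball); so it has a unique minimiser
  \<open>K\<close>, and \<open>K \<noteq> u x\<close> gives \<open>Lv(x) = \<phi>(K) < \<phi>(u x) = Lu(x)\<close>. At any other vertex \<open>z\<close>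
  only the quotient along the edge to \<open>x\<close> changes, and its new value
  \<open>\<parallel>u z - K\<parallel> / \<parallel>z - x\<parallel>\<close> is at most \<open>\<phi>(K)\<close>. Hence every increase of the local
  Lipschitz constant stays below \<open>\<phi>(K)\<close>, which is below the decrease at \<open>x\<close>.\<close>

lemma norm_midpoint_less:
  fixes p q :: "'a::real_inner"
  assumes "norm p \<le> s" "norm q \<le> s" "p \<noteq> q"
  shows "norm (midpoint p q) < s"
proof -
  have parallelogram: "(norm (p + q))\<^sup>2 + (norm (p - q))\<^sup>2 = 2 * (norm p)\<^sup>2 + 2 * (norm q)\<^sup>2"
    by (simp add: power2_norm_eq_inner inner_add_left inner_add_right inner_diff_left
        inner_diff_right inner_commute)
  have "0 < (norm (p - q))\<^sup>2" using assms(3) by simp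
  moreover have "(norm p)\<^sup>2 \<le> s\<^sup>2" "(norm q)\<^sup>2 \<le> s\<^sup>2"
    using power_mono[OF assms(1) norm_ge_zero] power_mono[OF assms(2) norm_ge_zero] by auto
  ultimately have "(norm (p + q))\<^sup>2 < 4 * s\<^sup>2"
    using parallelogram by linarith
  then have "(norm (p + q))\<^sup>2 < (2 * s)\<^sup>2"
    by (simp add: power_mult_distrib)
  then have "norm (p + q) < 2 * s"
    by (rule power2_less_imp_less) (use assms(1) norm_ge_zero[of p] in linarith)
  then show ?thesis by (simp add: midpoint_def)
qed

lemma continuous_on_SUP_finite:
  fixes f :: "'i \<Rightarrow> 'a::topological_space \<Rightarrow> 'b::{linorder_topology, conditionally_complete_linorder}"
  assumes "finite I" "I \<noteq> {}" "\<And>i. i \<in> I \<Longrightarrow> continuous_on S (f i)"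
  shows "continuous_on S (\<lambda>y. SUP i\<in>I. f i y)"
  using assms
proof (induction I rule: finite_ne_induct)
  case (insert i I)
  have "(\<lambda>y. SUP j\<in>insert i I. f j y) = (\<lambda>y. max (f i y) (SUP j\<in>I. f j y))"
    using insert by (simp add: cSup_insert_If sup_max)
  moreover have "continuous_on S (\<lambda>y. max (f i y) (SUP j\<in>I. f j y))"
    using insert by (intro continuous_on_max) auto
  ultimately show ?case
    by metis
qed simp

definition kirszbraun_objective ::
    "('a::real_normed_vector \<Rightarrow> 'b::real_normed_vector) \<Rightarrow> 'a set \<Rightarrow> 'a \<Rightarrow> 'b \<Rightarrow> real" where
  "kirszbraun_objective g A x y = (SUP a\<in>A. norm (g a - y) / norm (a - x))"

lemma kirszbraun_objective_upper:
  assumes "finite A" "a \<in> A"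
  shows "norm (g a - y) / norm (a - x) \<le> kirszbraun_objective g A x y"
  unfolding kirszbraun_objective_def using assms by (intro cSUP_upper) auto

lemma kirszbraun_objective_nonneg:
  assumes "finite A" "A \<noteq> {}"
  shows "0 \<le> kirszbraun_objective g A x y"
proof -
  obtain a where "a \<in> A" using assms(2) by blast
  have "0 \<le> norm (g a - y) / norm (a - x)" by simp
  also have "\<dots> \<le> kirszbraun_objective g A x y"
    using kirszbraun_objective_upper[OF assms(1) \<open>a \<in> A\<close>] .
  finally show ?thesis .
qed

lemma continuous_on_kirszbraun_objective:
  assumes "finite A" "A \<noteq> {}"
  shows "continuous_on S (kirszbraun_objective g A x)"
  unfolding kirszbraun_objective_def[abs_def] divide_inverse
  using assms by (intro continuous_on_SUP_finite) (auto intro!: continuous_intros)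

lemma kirszbraun_objective_has_minimiser:
  fixes g :: "'a::real_normed_vector \<Rightarrow> 'b::{real_normed_vector, heine_borel}"
  assumes "finite A" "A \<noteq> {}" "x \<notin> A"
  shows "\<exists>y. \<forall>z. kirszbraun_objective g A x y \<le> kirszbraun_objective g A x z"
proof -
  let ?\<phi> = "kirszbraun_objective g A x"
  obtain a where a: "a \<in> A" using assms(2) by blast
  define d where "d = norm (a - x)"
  have d: "0 < d" using a assms(3) unfolding d_def by auto
  define R where "R = norm (g a) + d * ?\<phi> 0"
  have "0 \<le> R"
    unfolding R_def using d kirszbraun_objective_nonneg[OF assms(1,2), of g x 0] by simp
  moreover have "continuous_on (cball 0 R) ?\<phi>"
    by (rule continuous_on_kirszbraun_objective[OF assms(1,2)])
  ultimately obtain y where y: "y \<in> cball 0 R" "\<And>z. z \<in> cball 0 R \<Longrightarrow> ?\<phi> y \<le> ?\<phi> z"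
    using continuous_attains_inf[of "cball 0 R" ?\<phi>] by auto
  \<comment> \<open>outside the ball the term of \<open>a\<close> alone already exceeds the value at 0\<close>
  have "?\<phi> y \<le> ?\<phi> z" for z
  proof (cases "z \<in> cball 0 R")
    case False
    then have "d * ?\<phi> 0 < norm (g a - z)"
      using norm_triangle_ineq2[of z "g a"] unfolding R_def by (simp add: norm_minus_commute)
    then have "?\<phi> 0 < norm (g a - z) / d"
      using d by (simp add: field_simps)
    also have "\<dots> \<le> ?\<phi> z"
      using kirszbraun_objective_upper[OF assms(1) a] unfolding d_def .
    finally show ?thesis
      using y(2)[of 0] \<open>0 \<le> R\<close> by simp
  qed (use y in auto)
  then show ?thesis by blast
qed

lemma kirszbraun_objective_minimiser_unique:
  fixes g :: "'a::real_normed_vector \<Rightarrow> 'b::real_inner"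
  assumes "finite A" "A \<noteq> {}" "x \<notin> A"
    and min1: "\<forall>z. kirszbraun_objective g A x y1 \<le> kirszbraun_objective g A x z"
    and min2: "\<forall>z. kirszbraun_objective g A x y2 \<le> kirszbraun_objective g A x z"
  shows "y1 = y2"
proof (rule ccontr)
  assume "y1 \<noteq> y2"
  let ?\<phi> = "kirszbraun_objective g A x"
  define r where "r = ?\<phi> y1"
  have r2: "?\<phi> y2 = r"
    using min1 min2 unfolding r_def by (meson order_antisym)
  \<comment> \<open>every term is strictly smaller at the midpoint, by strict convexity of the Euclidean ball\<close>
  have "norm (g a - midpoint y1 y2) / norm (a - x) < r" if a: "a \<in> A" for a
  proof -
    have d: "0 < norm (a - x)" using a assms(3) by auto
    have bound: "norm (g a - y) \<le> ?\<phi> y * norm (a - x)" for y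
      using kirszbraun_objective_upper[OF assms(1) a, of g y x] d by (simp add: field_simps)
    have "norm (g a - y1) \<le> r * norm (a - x)" "norm (g a - y2) \<le> r * norm (a - x)"
      using bound[of y1] bound[of y2] r2 unfolding r_def by simp_all
    then have "norm (midpoint (g a - y1) (g a - y2)) < r * norm (a - x)"
      using \<open>y1 \<noteq> y2\<close> by (intro norm_midpoint_less) auto
    moreover have "midpoint (g a - y1) (g a - y2) = g a - midpoint y1 y2"
      unfolding midpoint_eq_iff using midpoint_plus_self[of y1 y2] by (metis add_diff_add)
    ultimately show ?thesis
      using d by (simp add: field_simps)
  qed
  then have "?\<phi> (midpoint y1 y2) < r"
    unfolding kirszbraun_objective_def using assms(1) assms(2)
    by (subst cSup_eq_Max) (auto intro!: Max.boundedI)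
  then show False
    using min1 unfolding r_def by (meson not_le)
qed

lemma kirszbraun_objective_kirszbraun_value_less:
  fixes g :: "'a::euclidean_space \<Rightarrow> 'b::euclidean_space"
  assumes "finite A" "A \<noteq> {}" "x \<notin> A" "kirszbraun_value g A x \<noteq> y"
  shows "kirszbraun_objective g A x (kirszbraun_value g A x) < kirszbraun_objective g A x y"
proof -
  let ?minimiser = "\<lambda>y. \<forall>z. kirszbraun_objective g A x y \<le> kirszbraun_objective g A x z"
  have "\<exists>!y. ?minimiser y"
    using kirszbraun_objective_has_minimiser[OF assms(1-3)]
      kirszbraun_objective_minimiser_unique[OF assms(1-3)] by blast
  then have "?minimiser (kirszbraun_value g A x)"
    unfolding kirszbraun_value_def kirszbraun_objective_def by (rule theI')
  moreover have "\<not> ?minimiser y"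
    using calculation assms(4) kirszbraun_objective_minimiser_unique[OF assms(1-3)] by blast
  ultimately show ?thesis
    by (meson not_le order_trans)
qed

lemma finite_nbhd: "finite V \<Longrightarrow> finite (nbhd V E x)"
  unfolding nbhd_def by simp

lemma nbhd_not_empty:
  assumes "connected_graph V E" "x \<in> V" "w \<in> V" "w \<noteq> x"
  shows "nbhd V E x \<noteq> {}"
proof -
  have "(x, w) \<in> E\<^sup>*" "E \<subseteq> V \<times> V"
    using assms unfolding connected_graph_def by auto
  then obtain y where "(x, y) \<in> E" "y \<in> V"
    using assms(4) by (cases rule: converse_rtranclE) auto
  then show ?thesis
    unfolding nbhd_def by blast
qed

lemma local_lip_fun_upd_self:
  assumes "x \<notin> nbhd V E x"
  shows "local_lip V E (u(x := c)) x = kirszbraun_objective u (nbhd V E x) x c"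
  unfolding local_lip_def kirszbraun_objective_def using assms by (intro SUP_cong) auto

lemma local_lip_fun_upd_le:
  assumes "finite V" "sym E" "z \<in> V" "z \<noteq> x"
  shows "local_lip V E (u(x := c)) z \<le> max (local_lip V E u z) (kirszbraun_objective u (nbhd V E x) x c)"
proof (cases "nbhd V E z = {}")
  case True
  then show ?thesis by (simp add: local_lip_def)
next
  case False
  show ?thesis
    unfolding local_lip_def
  proof (rule cSUP_least[OF False])
    fix y assume y: "y \<in> nbhd V E z"
    show "norm ((u(x := c)) y - (u(x := c)) z) / norm (y - z)
      \<le> max (SUP y\<in>nbhd V E z. norm (u y - u z) / norm (y - z)) (kirszbraun_objective u (nbhd V E x) x c)"
    proof (cases "y = x")
      case True
      then have "z \<in> nbhd V E x"
        using y assms(2,3) unfolding nbhd_def by (auto dest: symD)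
      then have "norm (u z - c) / norm (z - x) \<le> kirszbraun_objective u (nbhd V E x) x c"
        by (rule kirszbraun_objective_upper[OF finite_nbhd[OF assms(1)]])
      then show ?thesis
        using True assms(4) by (simp add: norm_minus_commute)
    next
      case False
      have "norm (u y - u z) / norm (y - z) \<le> (SUP y\<in>nbhd V E z. norm (u y - u z) / norm (y - z))"
        using y finite_nbhd[OF assms(1)] by (intro cSUP_upper) auto
      then show ?thesis
        using False assms(4) by simp
    qed
  qed
qed

lemma max0_upper: "finite A \<Longrightarrow> a \<in> A \<Longrightarrow> a \<le> max0 A"
  unfolding max0_def by auto

lemma max0_least: "finite A \<Longrightarrow> 0 \<le> b \<Longrightarrow> (\<And>a. a \<in> A \<Longrightarrow> a \<le> b) \<Longrightarrow> max0 A \<le> b"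
  unfolding max0_def by auto

lemma tighterI:
  assumes "finite V" "x \<in> V - \<Omega>"
    and "0 \<le> local_lip V E v x" "local_lip V E v x < local_lip V E u x"
    and "\<And>z. z \<in> V - \<Omega> \<Longrightarrow> local_lip V E u z < local_lip V E v z
      \<Longrightarrow> local_lip V E v z \<le> local_lip V E v x"
  shows "tighter V E \<Omega> v u"
proof -
  have "max0 {local_lip V E v z | z. z \<in> V - \<Omega> \<and> local_lip V E v z > local_lip V E u z}
      \<le> local_lip V E v x"
    using assms(1,3,5) by (intro max0_least) auto
  also have "\<dots> < local_lip V E u x"
    by (fact assms(4))
  also have "\<dots> \<le> max0 {local_lip V E u z | z. z \<in> V - \<Omega> \<and> local_lip V E u z > local_lip V E v z}"
    using assms(1,2,4) by (intro max0_upper) auto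
  finally show ?thesis
    unfolding tighter_def .
qed

theorem mainTheorem1:
  fixes V :: "'a::euclidean_space set" and E :: "('a \<times> 'a) set" and \<Omega> :: "'a set"
    and f u :: "'a \<Rightarrow> 'b::euclidean_space" and x :: 'a
  assumes "connected_graph V E"
    and "\<Omega> \<subseteq> V" and "\<Omega> \<noteq> {}"
    and "u \<in> extensions \<Omega> f"
    and "x \<in> V - \<Omega>"
    and "kirszbraun_value u (nbhd V E x) x \<noteq> u x"
  shows "tighter V E \<Omega> (u(x := kirszbraun_value u (nbhd V E x) x)) u"
proof -
  let ?S = "nbhd V E x"
  let ?K = "kirszbraun_value u ?S x"
  let ?\<phi> = "kirszbraun_objective u ?S x"
  have V: "finite V" "sym E" and "x \<notin> ?S"
    using assms(1) unfolding connected_graph_def nbhd_def irrefl_def by auto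
  obtain w where "w \<in> \<Omega>"
    using assms(3) by blast
  then have "?S \<noteq> {}"
    using assms(1,2,5) by (intro nbhd_not_empty[where w = w]) auto
  note S = finite_nbhd[OF V(1)] this \<open>x \<notin> ?S\<close>
  have Lv: "local_lip V E (u(x := ?K)) x = ?\<phi> ?K"
    by (rule local_lip_fun_upd_self[OF S(3)])
  have Lu: "local_lip V E u x = ?\<phi> (u x)"
    using local_lip_fun_upd_self[OF S(3), of u "u x"] by simp
  have less: "?\<phi> ?K < ?\<phi> (u x)"
    by (rule kirszbraun_objective_kirszbraun_value_less[OF S assms(6)])
  show ?thesis
  proof (rule tighterI[OF V(1) assms(5)])
    show "0 \<le> local_lip V E (u(x := ?K)) x"
      unfolding Lv by (rule kirszbraun_objective_nonneg[OF S(1,2)])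
    show "local_lip V E (u(x := ?K)) x < local_lip V E u x"
      unfolding Lv Lu by (fact less)
  next
    fix z assume "z \<in> V - \<Omega>" and increase: "local_lip V E u z < local_lip V E (u(x := ?K)) z"
    moreover have "z \<noteq> x"
      using increase less Lu Lv by (metis less_asym)
    ultimately show "local_lip V E (u(x := ?K)) z \<le> local_lip V E (u(x := ?K)) x"
      using local_lip_fun_upd_le[OF V, of z x u ?K] unfolding Lv by simp
  qed
qed

end
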